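(* Let $A,B,C,D\in\mathsf{W}_\omega$ be such that $|A|=|B|$ and, for every position $i$, the $i$-th symbol of $A$ is $\le$ the $i$-th symbol of $B$. Then $A\precsim DBC$. Moreover, if either $C\neq\Lambda$ or the last symbols of $A$ and $B$ are different, then $A\prec DBC$.
   Context: Words are finite strings over $\mathbb{N}$; $\mathsf{W}_\omega$ is the set of all words, $\Lambda$ the empty word, juxtaposition denotes concatenation, $|A|$ is length. For $k\in\mathbb{N}$, $\mathsf{S}_k$ is the set of words all of whose symbols are $\ge k$. Given a linear preorder $\precsim$ with $A\sim B$ iff $A\precsim B\wedge B\precsim A$ and $A\prec B$ iff $A\precsim B\wedge\neg B\precsim A$, a finite sequence $(A_1,\dots,A_p)$ is lexicographically not greater than $(B_1,\dots,B_q)$ iff either $p\le q$ and $A_i\sim B_i$ for all $i\le p$, or there is $s<\min(p,q)$ with $A_i\sim B_i$ for $i\le s$ and $A_{s+1}\prec B_{s+1}$. A lexicographically maximal subsequence of a finite sequence is a subsequence that is lexicographically not less than every subsequence. The linear preorder $\precsim$ on $\mathsf{W}_\omega$ is defined by recursion on (largest symbol of $AB$) $-$ (smallest symbol of $AB$): $\Lambda\precsim\Lambda$; if $AB$ is nonempty with minimal symbol $n$, write uniquely $A=A_1n\cdots nA_k$, $B=B_1n\cdots nB_l$ ($k,l\ge1$) with $A_i,B_j\in\mathsf{S}_{n+1}$ (possibly empty); let $C,D$ be lexicographically maximal subsequences of $(A_1,\dots,A_k)$, $(B_1,\dots,B_l)$; then $A\precsim B$ iff $C$ is lexicographically not greater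 than $D$. *)

theory Defs
  imports Main
begin

(* Words are lists of naturals; [] is the empty word Lambda. *)

fun wsplit :: "nat \<Rightarrow> nat list \<Rightarrow> nat list list" where
  "wsplit n [] = [[]]"
| "wsplit n (x # xs) =
     (if x = n then [] # wsplit n xs
      else (let r = wsplit n xs in (x # hd r) # tl r))"

definition lexle :: "('a \<Rightarrow> 'a \<Rightarrow> bool) \<Rightarrow> 'a list \<Rightarrow> 'a list \<Rightarrow> bool" where
  "lexle r X Y \<longleftrightarrow>
     (length X \<le> length Y \<and> (\<forall>i<length X. r (X!i) (Y!i) \<and> r (Y!i) (X!i)))
   \<or> (\<exists>s < min (length X) (length Y).
        (\<forall>i<s. r (X!i) (Y!i) \<and> r (Y!i) (X!i)) \<and> r (X!s) (Y!s) \<and> \<not> r (Y!s) (X!s))"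

definition lexmax :: "('a \<Rightarrow> 'a \<Rightarrow> bool) \<Rightarrow> 'a list \<Rightarrow> 'a list \<Rightarrow> bool" where
  "lexmax r Xs C \<longleftrightarrow> C \<in> set (subseqs Xs) \<and> (\<forall>S \<in> set (subseqs Xs). lexle r S C)"

(* fuel-bounded version of the recursion; fuel only needs to exceed the spread *)
fun wle_f :: "nat \<Rightarrow> nat list \<Rightarrow> nat list \<Rightarrow> bool" where
  "wle_f 0 A B = True"
| "wle_f (Suc k) A B =
     (if A @ B = [] then True
      else (let n = Min (set (A @ B)) in
            \<exists>C D. lexmax (wle_f k) (wsplit n A) C \<and> lexmax (wle_f k) (wsplit n B) D
                  \<and> lexle (wle_f k) C D))"

(* A \<precsim> B : recursion on (largest symbol of AB) - (smallest symbol of AB) *)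
definition wle :: "nat list \<Rightarrow> nat list \<Rightarrow> bool" where
  "wle A B = wle_f (Suc (Max (set (A @ B)) - Min (set (A @ B)))) A B"

definition wless :: "nat list \<Rightarrow> nat list \<Rightarrow> bool" where
  "wless A B \<longleftrightarrow> wle A B \<and> \<not> wle B A"

end

theory Submission
  imports Defs "HOL-Library.List_Lexorder"
begin

text \<open>
  The preorder \<open>wle\<close> is the pullback of a genuine linear order. A word with symbols in
  \<open>{n..M}\<close> is encoded at level \<open>n\<close> as the tree whose children are the lexicographically
  maximal subsequence of the level-\<open>n+1\<close> codes of its \<open>n\<close>-blocks; in a linear order that
  maximal subsequence is just the list of right-to-left maxima. The theorem is then proved for
  the codes at every level, descending from the largest symbol. If \<open>n\<close> does not occur in
  \<open>B\<close>, then \<open>B\<close> lies inside a single block of \<open>DBC\<close>, which dominates every block of \<open>A\<close>.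
  Otherwise cut \<open>A\<close> and \<open>B\<close> at the last occurrence of \<open>n\<close> in \<open>B\<close> (where \<open>A\<close> must carry
  \<open>n\<close> too) and use that right-to-left maxima are monotone in both parts of a concatenation.
\<close>

section \<open>Trees ordered lexicographically\<close>

datatype tree = Node "tree list"

function tree_le :: "tree \<Rightarrow> tree \<Rightarrow> bool"
  and trees_le :: "tree list \<Rightarrow> tree list \<Rightarrow> bool" where
  "tree_le (Node xs) (Node ys) = trees_le xs ys"
| "trees_le [] ys = True"
| "trees_le (x # xs) [] = False"
| "trees_le (x # xs) (y # ys) =
    ((tree_le x y \<and> \<not> tree_le y x) \<or> (tree_le x y \<and> tree_le y x \<and> trees_le xs ys))"
  by pat_completeness auto
termination
  by (relation "measure (case_sum (\<lambda>(x, y). size x + size y)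
    (\<lambda>(xs, ys). size_list size xs + size_list size ys))") auto

lemma tree_le_refl: "tree_le x x"
proof (induction x)
  case (Node xs)
  then show ?case by (induction xs) auto
qed

lemma tree_le_total: "tree_le x y \<or> tree_le y x"
proof (induction x arbitrary: y)
  case (Node xs)
  obtain ys where y: "y = Node ys" by (cases y)
  have "trees_le xs ys \<or> trees_le ys xs" using Node
  proof (induction xs arbitrary: ys)
    case Nil then show ?case by simp
  next
    case (Cons a xs) then show ?case by (cases ys) auto
  qed
  then show ?case using y by simp
qed

lemma tree_le_antisym: "tree_le x y \<Longrightarrow> tree_le y x \<Longrightarrow> x = y"
proof (induction x arbitrary: y)
  case (Node xs)
  obtain ys where y: "y = Node ys" by (cases y)
  have "trees_le xs ys \<Longrightarrow> trees_le ys xs \<Longrightarrow> xs = ys" using Node.IH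
  proof (induction xs arbitrary: ys)
    case Nil then show ?case by (cases ys) auto
  next
    case (Cons a xs) then show ?case by (cases ys) auto
  qed
  then show ?case using y Node.prems by simp
qed

lemma trees_le_Cons_Cons:
  "trees_le (x # xs) (y # ys) = ((tree_le x y \<and> x \<noteq> y) \<or> (x = y \<and> trees_le xs ys))"
  using tree_le_antisym tree_le_refl by auto

lemma tree_le_trans: "tree_le x y \<Longrightarrow> tree_le y z \<Longrightarrow> tree_le x z"
proof (induction x arbitrary: y z)
  case (Node xs)
  obtain ys where y: "y = Node ys" by (cases y)
  obtain zs where z: "z = Node zs" by (cases z)
  have "trees_le xs ys \<Longrightarrow> trees_le ys zs \<Longrightarrow> trees_le xs zs" using Node.IH
  proof (induction xs arbitrary: ys zs)
    case Nil then show ?case by simp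
  next
    case (Cons a xs)
    obtain b ys' where ys: "ys = b # ys'" using Cons.prems(1) by (cases ys) simp_all
    obtain c zs' where zs: "zs = c # zs'" using Cons.prems(2) ys by (cases zs) simp_all
    have tr: "tree_le a b \<Longrightarrow> tree_le b c \<Longrightarrow> tree_le a c" using Cons.prems(3) by (meson list.set_intros(1))
    have ih3: "\<And>u v w. u \<in> set xs \<Longrightarrow> tree_le u v \<Longrightarrow> tree_le v w \<Longrightarrow> tree_le u w"
      using Cons.prems(3) by (meson list.set_intros(2))
    have ih: "trees_le xs ys' \<Longrightarrow> trees_le ys' zs' \<Longrightarrow> trees_le xs zs'"
      using Cons.IH[of ys' zs'] ih3 by blast
    have h1: "(tree_le a b \<and> a \<noteq> b) \<or> (a = b \<and> trees_le xs ys')" using Cons.prems(1) ys trees_le_Cons_Cons by simp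
    have h2: "(tree_le b c \<and> b \<noteq> c) \<or> (b = c \<and> trees_le ys' zs')" using Cons.prems(2) ys zs trees_le_Cons_Cons by simp
    have "(tree_le a c \<and> a \<noteq> c) \<or> (a = c \<and> trees_le xs zs')"
      using h1 h2 tr ih tree_le_antisym[of a b] by blast
    then show ?case using zs trees_le_Cons_Cons by simp
  qed
  then show ?case using y z Node.prems by simp
qed

instantiation tree :: linorder
begin
definition "less_eq_tree x y = tree_le x y"
definition "less_tree x y = (tree_le x y \<and> \<not> tree_le y x)"
instance
proof
  fix x y z :: tree
  show "(x < y) = (x \<le> y \<and> \<not> y \<le> x)" by (simp add: less_eq_tree_def less_tree_def)
  show "x \<le> x" by (simp add: less_eq_tree_def tree_le_refl)
  show "x \<le> y \<Longrightarrow> y \<le> z \<Longrightarrow> x \<le> z" unfolding less_eq_tree_def by (rule tree_le_trans)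
  show "x \<le> y \<Longrightarrow> y \<le> x \<Longrightarrow> x = y" unfolding less_eq_tree_def by (rule tree_le_antisym)
  show "x \<le> y \<or> y \<le> x" unfolding less_eq_tree_def by (rule tree_le_total)
qed
end

lemma Node_le_Node_iff: "(Node xs \<le> Node ys) = (xs \<le> ys)"
proof -
  have "trees_le xs ys = (xs \<le> ys)"
  proof (induction xs arbitrary: ys)
    case Nil then show ?case by simp
  next
    case (Cons a xs)
    show ?case
    proof (cases ys)
      case Nil then show ?thesis by simp
    next
      case (Cons b ys')
      have e: "(tree_le a b \<and> a \<noteq> b) = (a < b)"
        by (metis less_eq_tree_def order.strict_iff_order)
      show ?thesis unfolding Cons trees_le_Cons_Cons e using Cons.IH[of ys'] by simp
    qed
  qed
  then show ?thesis by (simp add: less_eq_tree_def)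
qed

lemma Node_less_Node_iff: "(Node xs < Node ys) = (xs < ys)"
  by (simp add: less_le_not_le Node_le_Node_iff)

section \<open>Maximal subsequences in a linear order\<close>

fun max_subseq :: "'a::linorder list \<Rightarrow> 'a list" where
  "max_subseq [] = []"
| "max_subseq (x # xs) =
    (if \<forall>y\<in>set xs. y \<le> x then x # max_subseq xs else max_subseq xs)"

lemma set_max_subseq_subset: "set (max_subseq xs) \<subseteq> set xs"
  by (induction xs) auto

lemma max_subseq_not_Nil: "xs \<noteq> [] \<Longrightarrow> max_subseq xs \<noteq> []"
proof (induction xs)
  case (Cons x xs) then show ?case by (cases "xs = []") auto
qed simp

lemma le_hd_max_subseq: "xs \<noteq> [] \<Longrightarrow> \<forall>y\<in>set xs. y \<le> hd (max_subseq xs)"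
proof (induction xs)
  case Nil then show ?case by simp
next
  case (Cons x xs)
  show ?case
  proof (cases "\<forall>y\<in>set xs. y \<le> x")
    case True then show ?thesis by simp
  next
    case False
    then obtain z where z: "z \<in> set xs" "\<not> z \<le> x" by auto
    then have "xs \<noteq> []" by auto
    with Cons.IH have "\<forall>y\<in>set xs. y \<le> hd (max_subseq xs)" by simp
    with z False show ?thesis by auto
  qed
qed

lemma hd_max_subseq_in_set: "xs \<noteq> [] \<Longrightarrow> hd (max_subseq xs) \<in> set xs"
  using set_max_subseq_subset max_subseq_not_Nil hd_in_set by blast

lemma max_subseq_eq_Cons:
  assumes "xs \<noteq> []"
  obtains m w where "max_subseq xs = m # w" "m \<in> set xs" "\<forall>y\<in>set xs. y \<le> m"
  using assms le_hd_max_subseq hd_max_subseq_in_set max_subseq_not_Nil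
  by (metis list.collapse)

lemma max_subseq_append:
  "max_subseq (xs @ ys) = takeWhile (\<lambda>x. \<forall>y\<in>set ys. y \<le> x) (max_subseq xs) @ max_subseq ys"
proof (induction xs)
  case Nil then show ?case by simp
next
  case (Cons x xs)
  show ?case
  proof (cases "\<forall>y\<in>set (xs @ ys). y \<le> x")
    case True then show ?thesis using Cons by auto
  next
    case False
    show ?thesis
    proof (cases "\<forall>y\<in>set xs. y \<le> x")
      case True
      with False obtain y where y: "y \<in> set ys" "\<not> y \<le> x" by auto
      have "takeWhile (\<lambda>x. \<forall>y\<in>set ys. y \<le> x) (max_subseq xs) = []"
      proof (cases "max_subseq xs")
        case (Cons h t)
        then have "h \<in> set xs" using set_max_subseq_subset by force
        then have "h \<le> x" using True by auto
        then have "\<not> y \<le> h" using y by auto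
        then show ?thesis using Cons y by auto
      qed simp
      then show ?thesis using Cons True False y by auto
    next
      case False
      then show ?thesis using Cons \<open>\<not> (\<forall>y\<in>set (xs @ ys). y \<le> x)\<close> by auto
    qed
  qed
qed

lemma le_Cons_if_bounded: "\<forall>a\<in>set w. a \<le> m \<Longrightarrow> w \<le> m # (w::'a::linorder list)"
proof (induction w)
  case Nil then show ?case by simp
next
  case (Cons a w)
  show ?case
  proof (cases "a = m")
    case True then show ?thesis using Cons by simp
  next
    case False then have "a < m" using Cons.prems by auto
    then show ?thesis by simp
  qed
qed

lemma Cons_le_append_Cons:
  "\<forall>a\<in>set w. a \<le> m \<Longrightarrow> \<forall>x\<in>set r. m \<le> x \<Longrightarrow> m # w \<le> r @ m # (w::'a::linorder list)"
proof (induction r)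
  case Nil then show ?case by simp
next
  case (Cons x r)
  show ?case
  proof (cases "x = m")
    case True
    have "w \<le> m # w" using le_Cons_if_bounded Cons.prems by blast
    also have "\<dots> \<le> r @ m # w" using Cons by simp
    finally show ?thesis using True by simp
  next
    case False then show ?thesis using Cons.prems by (auto simp: less_le)
  qed
qed

lemma max_subseq_le_append:
  assumes "ys \<noteq> []" "\<forall>x\<in>set r. \<forall>y\<in>set ys. y \<le> x"
  shows "max_subseq ys \<le> r @ max_subseq ys"
proof -
  obtain m w where mw: "max_subseq ys = m # w" "m \<in> set ys" "\<forall>y\<in>set ys. y \<le> m"
    using max_subseq_eq_Cons[OF assms(1)] .
  then have "\<forall>a\<in>set w. a \<le> m" using set_max_subseq_subset[of ys] by auto
  then show ?thesis using Cons_le_append_Cons assms(2) mw by metis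
qed

lemma takeWhile_append_mono:
  assumes mono: "\<And>a b. P a \<Longrightarrow> a \<le> b \<Longrightarrow> P b"
    and hq: "\<And>r. \<forall>x\<in>set r. P x \<Longrightarrow> w \<le> r @ w"
  shows "u \<le> u' \<Longrightarrow> takeWhile P u @ w \<le> takeWhile P u' @ (w::'a::linorder list)"
proof (induction u arbitrary: u')
  case Nil
  have "\<forall>x\<in>set (takeWhile P u'). P x" by (auto dest: set_takeWhileD)
  then show ?case using hq by simp
next
  case (Cons a s)
  then obtain b s' where u': "u' = b # s'" by (cases u') auto
  show ?case
  proof (cases "a < b")
    case True
    show ?thesis
    proof (cases "P a")
      case True
      then have "P b" using mono[of a b] \<open>a < b\<close> by (meson less_imp_le)
      then show ?thesis using True \<open>a < b\<close> u' by simp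
    next
      case False
      have "\<forall>x\<in>set (takeWhile P u'). P x" by (auto dest: set_takeWhileD)
      then show ?thesis using hq False by simp
    qed
  next
    case False
    then have "a = b" "s \<le> s'" using Cons.prems u' by auto
    then show ?thesis using Cons.IH u' by auto
  qed
qed

lemma max_subseq_append_mono_left:
  "max_subseq xs \<le> max_subseq xs' \<Longrightarrow> max_subseq (xs @ ys) \<le> max_subseq (xs' @ ys)"
proof -
  assume h: "max_subseq xs \<le> max_subseq xs'"
  let ?P = "\<lambda>x. \<forall>y\<in>set ys. y \<le> x"
  have hq: "\<And>r. \<forall>x\<in>set r. ?P x \<Longrightarrow> max_subseq ys \<le> r @ max_subseq ys"
    using max_subseq_le_append by (cases "ys = []") auto
  show ?thesis unfolding max_subseq_append
    by (rule takeWhile_append_mono[OF _ hq h]) auto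
qed

lemma append_le_append_iff: "(p @ a \<le> p @ b) = (a \<le> (b::'a::linorder list))"
  by (induction p) auto

lemma append_less_append_iff: "(p @ a < p @ b) = (a < (b::'a::linorder list))"
  by (induction p) auto

lemma takeWhile_split_dropWhile:
  "(\<And>x. P' x \<Longrightarrow> P x) \<Longrightarrow> takeWhile P u = takeWhile P' u @ takeWhile P (dropWhile P' u)"
  by (induction u) auto

lemma bounded_if_max_subseq_le:
  assumes "max_subseq ys \<le> max_subseq ys'" "\<forall>y\<in>set ys'. y \<le> x"
  shows "\<forall>y\<in>set ys. y \<le> x"
proof (cases "ys = []")
  case False
  obtain a t where a: "max_subseq ys = a # t" "\<forall>y\<in>set ys. y \<le> a"
    using max_subseq_eq_Cons[OF False] by metis
  with assms(1) obtain b t' where b: "max_subseq ys' = b # t'" "a \<le> b"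
    by (cases "max_subseq ys'") (auto simp: less_imp_le)
  then have "b \<le> x" using set_max_subseq_subset[of ys'] assms(2) by auto
  then show ?thesis using a b by (meson order_trans)
qed simp

lemma max_subseq_append_mono_right:
  assumes h: "max_subseq ys \<le> max_subseq ys'"
  shows "max_subseq (xs @ ys) \<le> max_subseq (xs @ ys')"
    and "max_subseq ys < max_subseq ys' \<Longrightarrow> max_subseq (xs @ ys) < max_subseq (xs @ ys')"
proof -
  let ?P = "\<lambda>x. \<forall>y\<in>set ys. y \<le> x"
  let ?P' = "\<lambda>x. \<forall>y\<in>set ys'. y \<le> x"
  let ?u = "max_subseq xs"
  have split: "takeWhile ?P ?u = takeWhile ?P' ?u @ takeWhile ?P (dropWhile ?P' ?u)"
    by (rule takeWhile_split_dropWhile, rule bounded_if_max_subseq_le[OF h])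
  define e where "e = takeWhile ?P (dropWhile ?P' ?u)"
  \<comment> \<open>\<open>e\<close> survives \<open>ys\<close> but not \<open>ys'\<close>, so it starts below the head of \<open>max_subseq ys'\<close>.\<close>
  have key: "e @ max_subseq ys \<le> max_subseq ys' \<and>
      (max_subseq ys < max_subseq ys' \<longrightarrow> e @ max_subseq ys < max_subseq ys')"
  proof (cases e)
    case Nil then show ?thesis using h by simp
  next
    case (Cons x e')
    then obtain x0 d where d: "dropWhile ?P' ?u = x0 # d"
      by (cases "dropWhile ?P' ?u") (auto simp: e_def)
    then have "\<not> ?P' x0" by (simp add: dropWhile_eq_Cons_conv)
    then obtain y where y: "y \<in> set ys'" "x0 < y" by (meson not_le)
    then obtain b t' where b: "max_subseq ys' = b # t'" "\<forall>y\<in>set ys'. y \<le> b"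
      using max_subseq_eq_Cons[of ys'] by (metis empty_iff list.set(1))
    have "e = x0 # takeWhile ?P d" using Cons d by (simp add: e_def split: if_splits)
    then have "e @ max_subseq ys < max_subseq ys'" using y b by fastforce
    then show ?thesis by (simp add: less_imp_le)
  qed
  have eq1: "max_subseq (xs @ ys) = takeWhile ?P' ?u @ (e @ max_subseq ys)"
    unfolding max_subseq_append e_def by (simp only: split append_assoc)
  have eq2: "max_subseq (xs @ ys') = takeWhile ?P' ?u @ max_subseq ys'"
    unfolding max_subseq_append by simp
  show "max_subseq (xs @ ys) \<le> max_subseq (xs @ ys')"
    unfolding eq1 eq2 append_le_append_iff using key by simp
  show "max_subseq ys < max_subseq ys' \<Longrightarrow> max_subseq (xs @ ys) < max_subseq (xs @ ys')"
    unfolding eq1 eq2 append_less_append_iff using key by simp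
qed

lemma single_le_max_subseq:
  shows "[y] \<le> max_subseq (ds @ y # cs)" and "cs \<noteq> [] \<Longrightarrow> [y] < max_subseq (ds @ y # cs)"
proof -
  have A: "max_subseq (y # cs) \<le> max_subseq (ds @ y # cs)"
    unfolding max_subseq_append[of ds]
    by (rule max_subseq_le_append) (auto dest: set_takeWhileD)
  have B: "[y] \<le> max_subseq (y # cs) \<and> (cs \<noteq> [] \<longrightarrow> [y] < max_subseq (y # cs))"
  proof (cases "\<forall>z\<in>set cs. z \<le> y")
    case True
    then show ?thesis using max_subseq_not_Nil[of cs] by (cases "max_subseq cs") auto
  next
    case False
    then obtain z where z: "z \<in> set cs" "y < z" by (auto simp: not_le)
    then obtain b t where "max_subseq cs = b # t" "z \<le> b"
      using max_subseq_eq_Cons[of cs] by (metis empty_iff list.set(1))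
    then show ?thesis using False z by auto
  qed
  show "[y] \<le> max_subseq (ds @ y # cs)" using A B by auto
  show "cs \<noteq> [] \<Longrightarrow> [y] < max_subseq (ds @ y # cs)" using A B by auto
qed

lemma max_subseq_snoc_le:
  assumes h: "max_subseq xs < [y]" and t: "t \<le> y"
  shows "max_subseq (xs @ [t]) \<le> [y]" and "t < y \<Longrightarrow> max_subseq (xs @ [t]) < [y]"
proof -
  have "max_subseq (xs @ [t]) \<le> [y] \<and> (t < y \<longrightarrow> max_subseq (xs @ [t]) < [y])"
  proof (cases "xs = []")
    case True then show ?thesis using t by auto
  next
    case False
    obtain hh tt where ht: "max_subseq xs = hh # tt"
      using max_subseq_eq_Cons[OF False] by metis
    have "hh < y" using h ht by auto
    show ?thesis
    proof (cases "t \<le> hh")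
      case True
      then show ?thesis unfolding max_subseq_append using ht \<open>hh < y\<close> by auto
    next
      case False
      then show ?thesis unfolding max_subseq_append using ht t by auto
    qed
  qed
  then show "max_subseq (xs @ [t]) \<le> [y]" "t < y \<Longrightarrow> max_subseq (xs @ [t]) < [y]" by auto
qed

lemma max_subseq_in_subseqs: "max_subseq xs \<in> set (subseqs xs)"
  by (induction xs) (auto simp: Let_def)

lemma subseq_le_max_subseq: "S \<in> set (subseqs xs) \<Longrightarrow> S \<le> max_subseq xs"
proof (induction xs arbitrary: S)
  case Nil then show ?case by simp
next
  case (Cons x xs)
  from Cons.prems have S: "(\<exists>S'. S = x # S' \<and> S' \<in> set (subseqs xs)) \<or> S \<in> set (subseqs xs)"
    by (auto simp: Let_def)
  show ?case
  proof (cases "\<forall>y\<in>set xs. y \<le> x")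
    case True
    have s: "max_subseq (x # xs) = x # max_subseq xs" using True by simp
    show ?thesis using S
    proof
      assume "\<exists>S'. S = x # S' \<and> S' \<in> set (subseqs xs)"
      then obtain S' where S': "S = x # S'" "S' \<in> set (subseqs xs)" by blast
      have "S' \<le> max_subseq xs" using Cons.IH S'(2) by simp
      then show ?thesis using s S'(1) by simp
    next
      assume h: "S \<in> set (subseqs xs)"
      have "S \<le> max_subseq xs" using Cons.IH h by simp
      also have "\<dots> \<le> x # max_subseq xs"
        using le_Cons_if_bounded[of "max_subseq xs" x] True set_max_subseq_subset[of xs] by blast
      finally show ?thesis using s by simp
    qed
  next
    case False
    then obtain z where z: "z \<in> set xs" "x < z" by (auto simp: not_le)
    then obtain b t where b: "max_subseq xs = b # t" "z \<le> b"
      using max_subseq_eq_Cons[of xs] by (metis empty_iff list.set(1))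
    then have "x < b" using z by simp
    show ?thesis using S
    proof
      assume "\<exists>S'. S = x # S' \<and> S' \<in> set (subseqs xs)"
      then obtain S' where S': "S = x # S'" by blast
      have "max_subseq (x # xs) = b # t" using False b by simp
      then show ?thesis using S' \<open>x < b\<close> by simp
    next
      assume h: "S \<in> set (subseqs xs)"
      have "max_subseq (x # xs) = max_subseq xs" using False by simp
      then show ?thesis using Cons.IH h by simp
    qed
  qed
qed

section \<open>Lexicographic maxima under a pulled-back preorder\<close>

lemma subseqs_map: "subseqs (map f xs) = map (map f) (subseqs xs)"
  by (induction xs) (auto simp: Let_def)

lemma set_subseqs_subset: "S \<in> set (subseqs xs) \<Longrightarrow> set S \<subseteq> set xs"
  using subseqs_powset by (metis Pow_iff image_eqI)

lemma max_subseq_map_in_subseqs: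
  obtains C where "C \<in> set (subseqs Xs)" "map f C = max_subseq (map f Xs)"
  using max_subseq_in_subseqs[of "map f Xs"] unfolding subseqs_map by auto

lemma lexle_Nil: "lexle r [] Y"
  by (simp add: lexle_def)

lemma lexle_Cons_Nil: "\<not> lexle r (x # X) []"
  by (simp add: lexle_def)

lemma lexle_Cons: "lexle r (x # X) (y # Y) =
   ((r x y \<and> \<not> r y x) \<or> (r x y \<and> r y x \<and> lexle r X Y))"
proof -
  have "lexle r (x # X) (y # Y) =
     ((length X \<le> length Y \<and> (r x y \<and> r y x) \<and> (\<forall>i<length X. r (X!i) (Y!i) \<and> r (Y!i) (X!i)))
   \<or> ((r x y \<and> \<not> r y x) \<or> ((r x y \<and> r y x) \<and> (\<exists>s < min (length X) (length Y).
        (\<forall>i<s. r (X!i) (Y!i) \<and> r (Y!i) (X!i)) \<and> r (X!s) (Y!s) \<and> \<not> r (Y!s) (X!s)))))"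
    unfolding lexle_def
    by (simp add: All_less_Suc2 Ex_less_Suc2) blast
  then show ?thesis unfolding lexle_def by auto
qed

lemma lexle_pullback:
  assumes "\<forall>P\<in>S. \<forall>Q\<in>S. r P Q = (f P \<le> (f Q :: 'b::linorder))"
  shows "set X \<subseteq> S \<Longrightarrow> set Y \<subseteq> S \<Longrightarrow> lexle r X Y = (map f X \<le> map f Y)"
proof (induction X arbitrary: Y)
  case Nil then show ?case by (simp add: lexle_Nil)
next
  case (Cons x X)
  then show ?case
  proof (cases Y)
    case Nil then show ?thesis by (simp add: lexle_Cons_Nil)
  next
    case (Cons y Y')
    have rx: "r x y = (f x \<le> f y)" "r y x = (f y \<le> f x)" using assms Cons.prems Cons by auto
    have ih: "lexle r X Y' = (map f X \<le> map f Y')" using Cons.IH[of Y'] Cons.prems Cons by auto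
    show ?thesis unfolding Cons lexle_Cons rx ih by (auto simp: less_le_not_le)
  qed
qed

lemma lexmax_pullback:
  assumes pullback: "\<forall>P\<in>S. \<forall>Q\<in>S. r P Q = (f P \<le> (f Q :: 'b::linorder))"
    and XS: "set Xs \<subseteq> S"
  shows "lexmax r Xs C = (C \<in> set (subseqs Xs) \<and> map f C = max_subseq (map f Xs))"
proof -
  have sub: "\<And>T. T \<in> set (subseqs Xs) \<Longrightarrow> set T \<subseteq> S" using set_subseqs_subset XS by blast
  obtain S0 where S0: "S0 \<in> set (subseqs Xs)" "map f S0 = max_subseq (map f Xs)"
    by (rule max_subseq_map_in_subseqs)
  show ?thesis
  proof
    assume h: "lexmax r Xs C"
    then have C: "C \<in> set (subseqs Xs)" "\<forall>T\<in>set (subseqs Xs). lexle r T C"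
      unfolding lexmax_def by auto
    have "map f C \<le> max_subseq (map f Xs)"
      using subseq_le_max_subseq[of "map f C" "map f Xs"] C(1) unfolding subseqs_map by auto
    moreover have "map f S0 \<le> map f C"
      using C(2) S0(1) lexle_pullback[OF pullback] sub[OF C(1)] sub[OF S0(1)] by blast
    ultimately show "C \<in> set (subseqs Xs) \<and> map f C = max_subseq (map f Xs)"
      using S0 C by auto
  next
    assume h: "C \<in> set (subseqs Xs) \<and> map f C = max_subseq (map f Xs)"
    have "\<forall>T\<in>set (subseqs Xs). lexle r T C"
    proof
      fix T assume T: "T \<in> set (subseqs Xs)"
      have "map f T \<le> max_subseq (map f Xs)"
        using subseq_le_max_subseq[of "map f T" "map f Xs"] T unfolding subseqs_map by auto
      then show "lexle r T C" using lexle_pullback[OF pullback] sub[OF T] sub[of C] h by auto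
    qed
    then show "lexmax r Xs C" using h unfolding lexmax_def by auto
  qed
qed

lemma ex_lexmax_pullback:
  assumes pullback: "\<forall>P\<in>S. \<forall>Q\<in>S. r P Q = (f P \<le> (f Q :: 'b::linorder))"
    and XS: "set Xs \<subseteq> S" and YS: "set Ys \<subseteq> S"
  shows "(\<exists>C D. lexmax r Xs C \<and> lexmax r Ys D \<and> lexle r C D) =
         (max_subseq (map f Xs) \<le> max_subseq (map f Ys))"
proof
  assume "\<exists>C D. lexmax r Xs C \<and> lexmax r Ys D \<and> lexle r C D"
  then obtain C D where h: "lexmax r Xs C" "lexmax r Ys D" "lexle r C D" by blast
  have C: "C \<in> set (subseqs Xs)" "map f C = max_subseq (map f Xs)" using h(1) lexmax_pullback[OF pullback XS] by auto
  have D: "D \<in> set (subseqs Ys)" "map f D = max_subseq (map f Ys)" using h(2) lexmax_pullback[OF pullback YS] by auto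
  have "set C \<subseteq> S" "set D \<subseteq> S" using C D set_subseqs_subset XS YS by blast+
  then show "max_subseq (map f Xs) \<le> max_subseq (map f Ys)" using lexle_pullback[OF pullback] h(3) C D by auto
next
  assume le: "max_subseq (map f Xs) \<le> max_subseq (map f Ys)"
  obtain C where C: "C \<in> set (subseqs Xs)" "map f C = max_subseq (map f Xs)"
    by (rule max_subseq_map_in_subseqs)
  obtain D where D: "D \<in> set (subseqs Ys)" "map f D = max_subseq (map f Ys)"
    by (rule max_subseq_map_in_subseqs)
  have "set C \<subseteq> S" "set D \<subseteq> S" using C D set_subseqs_subset XS YS by blast+
  then have "lexle r C D" using lexle_pullback[OF pullback] le C D by auto
  then show "\<exists>C D. lexmax r Xs C \<and> lexmax r Ys D \<and> lexle r C D"
    using C D lexmax_pullback[OF pullback XS] lexmax_pullback[OF pullback YS] by blast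
qed

section \<open>Splitting a word at a symbol\<close>

lemma wsplit_not_Nil: "wsplit n xs \<noteq> []"
  by (induction xs) (auto simp: Let_def)

lemma set_wsplit_subset: "P \<in> set (wsplit n A) \<Longrightarrow> set P \<subseteq> set A - {n}"
proof (induction A arbitrary: P)
  case Nil then show ?case by simp
next
  case (Cons x A)
  show ?case
  proof (cases "x = n")
    case True then show ?thesis using Cons by auto
  next
    case False
    have ne: "wsplit n A \<noteq> []" by (rule wsplit_not_Nil)
    from Cons.prems False have "P = x # hd (wsplit n A) \<or> P \<in> set (tl (wsplit n A))"
      by (auto simp: Let_def)
    then show ?thesis
    proof
      assume "P = x # hd (wsplit n A)"
      then show ?thesis using Cons.IH[of "hd (wsplit n A)"] ne False by auto
    next
      assume "P \<in> set (tl (wsplit n A))"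
      then have "P \<in> set (wsplit n A)" using ne by (cases "wsplit n A") auto
      then show ?thesis using Cons.IH by auto
    qed
  qed
qed

lemma wsplit_if_notin: "n \<notin> set A \<Longrightarrow> wsplit n A = [A]"
  by (induction A) auto

lemma wsplit_append_sep: "wsplit n (X @ n # Y) = wsplit n X @ wsplit n Y"
proof (induction X)
  case Nil then show ?case by simp
next
  case (Cons x X)
  have ne: "wsplit n X \<noteq> []" by (rule wsplit_not_Nil)
  then show ?case using Cons by (cases "wsplit n X") (auto simp: Let_def)
qed

lemma wsplit_append: "wsplit n (X @ Y) =
   butlast (wsplit n X) @ [last (wsplit n X) @ hd (wsplit n Y)] @ tl (wsplit n Y)"
proof (induction X)
  case Nil
  have "wsplit n Y \<noteq> []" by (rule wsplit_not_Nil)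
  then show ?case by (cases "wsplit n Y") auto
next
  case (Cons x X)
  have ne: "wsplit n X \<noteq> []" by (rule wsplit_not_Nil)
  show ?case
  proof (cases "x = n")
    case True then show ?thesis using Cons ne by auto
  next
    case False
    then show ?thesis using Cons ne
      by (cases "wsplit n X"; cases "tl (wsplit n X)") (auto simp: Let_def)
  qed
qed

lemma wsplit_append_append: "n \<notin> set B \<Longrightarrow> wsplit n (D @ B @ C) =
   butlast (wsplit n D) @ [last (wsplit n D) @ B @ hd (wsplit n C)] @ tl (wsplit n C)"
  using wsplit_append[of n D "B @ C"] wsplit_append[of n B C] wsplit_if_notin[of n B] by simp

lemma wsplit_not_Nil_tail: "C \<noteq> [] \<Longrightarrow> hd (wsplit n C) \<noteq> [] \<or> tl (wsplit n C) \<noteq> []"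
  using wsplit_not_Nil by (cases C) (auto simp: Let_def)

section \<open>Encoding words as trees\<close>

text \<open>The bound \<open>M\<close> only makes the recursion terminate: by \<open>wle_iff_enc_le\<close>, any \<open>M\<close>
  above all symbols involved gives the same comparisons.\<close>

function enc :: "nat \<Rightarrow> nat \<Rightarrow> nat list \<Rightarrow> tree" where
  "enc M n A =
    (if M < n then Node [] else Node (max_subseq (map (enc M (Suc n)) (wsplit n A))))"
  by auto
termination by (relation "measure (\<lambda>(M, n, A). Suc M - n)") auto

declare enc.simps[simp del]

lemma enc_unfold:
  "n \<le> M \<Longrightarrow> enc M n A = Node (max_subseq (map (enc M (Suc n)) (wsplit n A)))"
  by (subst enc.simps) simp

lemma enc_le_enc_iff_lower_level:
  assumes "n \<le> m" "m \<le> M" "set A \<subseteq> {m..}" "set B \<subseteq> {m..}"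
  shows "(enc M n A \<le> enc M n B) = (enc M m A \<le> enc M m B)"
  using assms
proof (induction "m - n" arbitrary: n)
  case 0 then show ?case by simp
next
  case (Suc d)
  then have "n < m" by simp
  then have "n \<notin> set A" "n \<notin> set B" using Suc.prems by auto
  then have eA: "enc M n A = Node [enc M (Suc n) A]"
    and eB: "enc M n B = Node [enc M (Suc n) B]"
    using enc_unfold[of n M] wsplit_if_notin Suc.prems \<open>n < m\<close> by auto
  have "(enc M (Suc n) A \<le> enc M (Suc n) B) = (enc M m A \<le> enc M m B)"
    using Suc.hyps(1)[of "Suc n"] Suc.hyps(2) Suc.prems \<open>n < m\<close> by simp
  then show ?case unfolding eA eB Node_le_Node_iff by (auto simp: less_le)
qed

lemma set_wsplit_Min_subset:
  assumes "P \<in> set (wsplit m A)" "set A \<subseteq> {m..M}"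
  shows "set P \<subseteq> {Suc m..M}"
  using set_wsplit_subset[OF assms(1)] assms(2) by fastforce

lemma wle_f_iff_enc_le:
  "set (A @ B) \<subseteq> {n..M} \<Longrightarrow> Suc M - n \<le> k \<Longrightarrow> wle_f k A B = (enc M n A \<le> enc M n B)"
proof (induction k arbitrary: n A B)
  case 0
  then have "A = []" "B = []" by auto
  then show ?case by simp
next
  case (Suc k)
  show ?case
  proof (cases "A @ B = []")
    case True then show ?thesis by simp
  next
    case False
    define m where "m = Min (set (A @ B))"
    have "m \<in> set (A @ B)" unfolding m_def using False by (intro Min_in) auto
    moreover have "\<forall>x\<in>set (A @ B). m \<le> x" by (simp add: m_def)
    ultimately have nm: "n \<le> m" "m \<le> M" and AB: "set A \<subseteq> {m..M}" "set B \<subseteq> {m..M}"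
      using Suc.prems(1) by auto
    define S where "S = {P. set P \<subseteq> {Suc m..M}}"
    have pullback: "\<forall>P\<in>S. \<forall>Q\<in>S. wle_f k P Q = (enc M (Suc m) P \<le> enc M (Suc m) Q)"
      using Suc.IH Suc.prems(2) nm unfolding S_def by auto
    have "set (wsplit m A) \<subseteq> S" "set (wsplit m B) \<subseteq> S"
      using set_wsplit_Min_subset AB unfolding S_def by blast+
    then have "wle_f (Suc k) A B =
        (max_subseq (map (enc M (Suc m)) (wsplit m A)) \<le> max_subseq (map (enc M (Suc m)) (wsplit m B)))"
      using ex_lexmax_pullback[OF pullback] False by (simp add: m_def Let_def)
    also have "\<dots> = (enc M m A \<le> enc M m B)"
      using enc_unfold[OF nm(2)] Node_le_Node_iff by simp
    also have "\<dots> = (enc M n A \<le> enc M n B)"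
      using enc_le_enc_iff_lower_level[OF nm, of A B] AB by (simp add: subset_iff)
    finally show ?thesis .
  qed
qed

lemma wle_iff_enc_le: "set (A @ B) \<subseteq> {n..M} \<Longrightarrow> wle A B = (enc M n A \<le> enc M n B)"
proof (cases "A @ B = []")
  case True then show ?thesis by (simp add: wle_def)
next
  case False
  assume range: "set (A @ B) \<subseteq> {n..M}"
  define mx mn where "mx = Max (set (A @ B))" and "mn = Min (set (A @ B))"
  have "set (A @ B) \<subseteq> {mn..mx}" by (auto simp: mx_def mn_def)
  then have "wle A B = (enc mx mn A \<le> enc mx mn B)"
    unfolding wle_def mx_def[symmetric] mn_def[symmetric] by (rule wle_f_iff_enc_le) simp
  also have "\<dots> = wle_f (Suc M + Suc mx) A B"
    by (rule wle_f_iff_enc_le[OF \<open>set (A @ B) \<subseteq> {mn..mx}\<close>, symmetric]) simp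
  also have "\<dots> = (enc M n A \<le> enc M n B)" by (rule wle_f_iff_enc_le[OF range]) simp
  finally show ?thesis .
qed

section \<open>Domination\<close>

definition domination_mono :: "nat set \<Rightarrow> (nat list \<Rightarrow> 'a::order) \<Rightarrow> bool" where
  "domination_mono \<Sigma> g \<longleftrightarrow> (\<forall>A B C D. set (A @ B @ C @ D) \<subseteq> \<Sigma> \<longrightarrow> list_all2 (\<le>) A B \<longrightarrow>
     g A \<le> g (D @ B @ C) \<and> ((C \<noteq> [] \<or> last A \<noteq> last B) \<longrightarrow> g A < g (D @ B @ C)))"

lemma domination_monoD:
  assumes "domination_mono \<Sigma> g" "set (A @ B @ C @ D) \<subseteq> \<Sigma>" "list_all2 (\<le>) A B"
  shows "g A \<le> g (D @ B @ C)" and "C \<noteq> [] \<or> last A \<noteq> last B \<Longrightarrow> g A < g (D @ B @ C)"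
  using assms unfolding domination_mono_def by blast+

lemma domination_mono_comp:
  assumes "strict_mono (h :: 'a::linorder \<Rightarrow> 'b::linorder)" "domination_mono \<Sigma> g"
  shows "domination_mono \<Sigma> (\<lambda>W. h (g W))"
  using assms unfolding domination_mono_def by (simp add: strict_mono_less strict_mono_less_eq)

definition block_code :: "(nat list \<Rightarrow> 'a::linorder) \<Rightarrow> nat \<Rightarrow> nat list \<Rightarrow> 'a list" where
  "block_code g n W = max_subseq (map g (wsplit n W))"

context
  fixes g :: "nat list \<Rightarrow> 'a::linorder" and n :: nat and \<Sigma> :: "nat set"
  assumes dom: "domination_mono (\<Sigma> - {n}) g"
begin

lemma Nil_less_if_domination_mono: "W \<noteq> [] \<Longrightarrow> set W \<subseteq> \<Sigma> - {n} \<Longrightarrow> g [] < g W"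
  using domination_monoD(2)[OF dom, of "[]" "[]" W "[]"] by simp

lemma block_code_le_single:
  assumes "set (A @ B @ E @ F) \<subseteq> \<Sigma>" "n \<notin> set (B @ E @ F)" "list_all2 (\<le>) A B"
  shows "block_code g n A \<le> [g (E @ B @ F)] \<and>
    ((F \<noteq> [] \<or> last A \<noteq> last B) \<longrightarrow> block_code g n A < [g (E @ B @ F)])"
  using assms
proof (induction "length A" arbitrary: A B F rule: less_induct)
  case less
  show ?case
  proof (cases "n \<in> set A")
    case False
    then have "block_code g n A = [g A]" by (simp add: block_code_def wsplit_if_notin)
    moreover have "set (A @ B @ F @ E) \<subseteq> \<Sigma> - {n}" using less.prems False by auto
    ultimately show ?thesis using domination_monoD[OF dom _ less.prems(3)] by (auto simp: less_le)
  next
    case True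
    obtain A' Ak where A: "A = A' @ n # Ak" and "n \<notin> set Ak"
      using split_list_last[OF True] by blast
    obtain B' b Bk where B: "B = B' @ b # Bk" and AB': "list_all2 (\<le>) A' B'"
      and "n \<le> b" and ABk: "list_all2 (\<le>) Ak Bk"
      using less.prems(3) unfolding A by (auto simp: list_all2_append1 list_all2_Cons1)
    define y where "y = g (E @ B @ F)"
    have "max_subseq (map g (wsplit n A')) < [y]"
      using less.hyps[of A' B' "b # Bk @ F"] less.prems A B AB' by (auto simp: block_code_def y_def)
    moreover have "block_code g n A = max_subseq (map g (wsplit n A') @ [g Ak])"
      using \<open>n \<notin> set Ak\<close> by (simp add: block_code_def A wsplit_append_sep wsplit_if_notin)
    moreover have Ak_set: "set (Ak @ Bk @ F @ (E @ B' @ [b])) \<subseteq> \<Sigma> - {n}"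
      using less.prems A B \<open>n \<notin> set Ak\<close> by auto
    have "g Ak \<le> y" using domination_monoD(1)[OF dom Ak_set ABk] B by (simp add: y_def)
    moreover have "g Ak < y" if "F \<noteq> [] \<or> last A \<noteq> last B"
    proof (cases "Ak = []")
      case True
      have "set (E @ B @ F) \<subseteq> \<Sigma> - {n}" using less.prems by auto
      then show ?thesis using Nil_less_if_domination_mono True B by (simp add: y_def)
    next
      case False
      with list_all2_lengthD[OF ABk] have "last A = last Ak" "last B = last Bk"
        using A B by auto
      then show ?thesis using domination_monoD(2)[OF dom Ak_set ABk] that B by (simp add: y_def)
    qed
    ultimately show ?thesis using max_subseq_snoc_le by (auto simp: y_def)
  qed
qed

lemma block_code_le_if_notin:
  assumes "set (A @ B @ C @ D) \<subseteq> \<Sigma>" "n \<notin> set B" "list_all2 (\<le>) A B"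
  shows "block_code g n A \<le> block_code g n (D @ B @ C) \<and>
    ((C \<noteq> [] \<or> last A \<noteq> last B) \<longrightarrow> block_code g n A < block_code g n (D @ B @ C))"
proof -
  define E F where "E = last (wsplit n D)" and "F = hd (wsplit n C)"
  define ds cs where "ds = map g (butlast (wsplit n D))" and "cs = map g (tl (wsplit n C))"
  have "set E \<subseteq> set D - {n}" "set F \<subseteq> set C - {n}"
    unfolding E_def F_def using set_wsplit_subset wsplit_not_Nil by (metis last_in_set hd_in_set)+
  then have "set (A @ B @ E @ F) \<subseteq> \<Sigma>" "n \<notin> set (B @ E @ F)" using assms by auto
  note single = block_code_le_single[OF this assms(3)]
  have code: "block_code g n (D @ B @ C) = max_subseq (ds @ g (E @ B @ F) # cs)"
    unfolding block_code_def wsplit_append_append[OF assms(2)] E_def F_def ds_def cs_def by simp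
  have "cs \<noteq> []" if "C \<noteq> []" "F = []"
    using wsplit_not_Nil_tail[OF that(1)] that(2) by (simp add: F_def cs_def)
  then show ?thesis
    unfolding code using single single_le_max_subseq[where y = "g (E @ B @ F)" and ds = ds and cs = cs]
    by (meson order.trans order.strict_trans1 order.strict_trans2)
qed

lemma domination_mono_block_code: "\<Sigma> \<subseteq> {n..} \<Longrightarrow> domination_mono \<Sigma> (block_code g n)"
proof -
  assume alphabet: "\<Sigma> \<subseteq> {n..}"
  have "block_code g n A \<le> block_code g n (D @ B @ C) \<and>
      ((C \<noteq> [] \<or> last A \<noteq> last B) \<longrightarrow> block_code g n A < block_code g n (D @ B @ C))"
    if "set (A @ B @ C @ D) \<subseteq> \<Sigma>" "list_all2 (\<le>) A B" for A B C D
    using that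
  proof (induction "length B" arbitrary: A B C D rule: less_induct)
    case less
    show ?case
    proof (cases "n \<in> set B")
      case False
      then show ?thesis using block_code_le_if_notin less.prems by blast
    next
      case True
      obtain B' Bl where B: "B = B' @ n # Bl" and "n \<notin> set Bl"
        using split_list_last[OF True] by blast
      obtain A' a Al where A: "A = A' @ a # Al" and AB': "list_all2 (\<le>) A' B'"
        and "a \<le> n" and ABl: "list_all2 (\<le>) Al Bl"
        using less.prems(2) unfolding B by (auto simp: list_all2_append2 list_all2_Cons2)
      have "a = n" using \<open>a \<le> n\<close> less.prems(1) alphabet A by fastforce
      let ?left = "max_subseq (map g (wsplit n (D @ B')) @ map g (wsplit n Al))"
      have "block_code g n A' \<le> block_code g n (D @ B' @ [])"
        using less.hyps[of B' A' "[]" D] less.prems AB' A B by auto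
      then have "block_code g n A \<le> ?left"
        using max_subseq_append_mono_left by (simp add: block_code_def A \<open>a = n\<close> wsplit_append_sep)
      moreover have "block_code g n Al \<le> block_code g n ([] @ Bl @ C) \<and>
          ((C \<noteq> [] \<or> last Al \<noteq> last Bl) \<longrightarrow> block_code g n Al < block_code g n ([] @ Bl @ C))"
        using less.hyps[of Bl Al C "[]"] less.prems ABl A B by auto
      then have "?left \<le> block_code g n (D @ B @ C) \<and>
          ((C \<noteq> [] \<or> last Al \<noteq> last Bl) \<longrightarrow> ?left < block_code g n (D @ B @ C))"
        using max_subseq_append_mono_right[of "map g (wsplit n Al)" "map g (wsplit n (Bl @ C))"]
        by (simp add: block_code_def B wsplit_append_sep[where X = "D @ B'", simplified])
      moreover have "C \<noteq> [] \<or> last Al \<noteq> last Bl" if "C \<noteq> [] \<or> last A \<noteq> last B"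
        using that list_all2_lengthD[OF ABl] A B \<open>a = n\<close> by (cases Al; cases Bl) auto
      ultimately show ?thesis by (meson order.trans order.strict_trans1)
    qed
  qed
  then show ?thesis unfolding domination_mono_def by blast
qed

end

lemma strict_mono_Node: "strict_mono Node"
  by (simp add: strict_mono_def Node_less_Node_iff)

lemma domination_mono_enc: "domination_mono {n..M} (enc M n)"
proof (induction "Suc M - n" arbitrary: n)
  case 0
  then show ?case by (simp add: domination_mono_def)
next
  case (Suc d)
  then have "n \<le> M" by simp
  have "{n..M} - {n} = {Suc n..M}" by auto
  then have "domination_mono ({n..M} - {n}) (enc M (Suc n))" using Suc by simp
  then have "domination_mono {n..M} (\<lambda>W. Node (block_code (enc M (Suc n)) n W))"
    by (intro domination_mono_comp[OF strict_mono_Node] domination_mono_block_code) auto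
  moreover have "enc M n = (\<lambda>W. Node (block_code (enc M (Suc n)) n W))"
    using enc_unfold[OF \<open>n \<le> M\<close>] by (simp add: fun_eq_iff block_code_def)
  ultimately show ?case by simp
qed

theorem lemma4:
  fixes A B C D :: "nat list"
  assumes "length A = length B"
    and "\<forall>i < length A. A ! i \<le> B ! i"
  shows "wle A (D @ B @ C) \<and>
         ((C \<noteq> [] \<or> last A \<noteq> last B) \<longrightarrow> wless A (D @ B @ C))"
proof -
  define M where "M = Max (insert 0 (set (A @ B @ C @ D)))"
  have range: "set (A @ B @ C @ D) \<subseteq> {0..M}" by (auto simp: M_def)
  moreover have "list_all2 (\<le>) A B" using assms by (simp add: list_all2_conv_all_nth)
  ultimately have "enc M 0 A \<le> enc M 0 (D @ B @ C)"
    and "C \<noteq> [] \<or> last A \<noteq> last B \<Longrightarrow> enc M 0 A < enc M 0 (D @ B @ C)"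
    using domination_monoD[OF domination_mono_enc] by blast+
  moreover have "set (A @ D @ B @ C) \<subseteq> {0..M}" "set ((D @ B @ C) @ A) \<subseteq> {0..M}"
    using range by auto
  note wle_iff = wle_iff_enc_le[OF this(1)] wle_iff_enc_le[OF this(2)]
  ultimately show ?thesis unfolding wless_def wle_iff by auto
qed

end
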